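(* Let $\mathcal{H}$ be a finite family of rooted digraphs. Let $D$ be a digraph, $k$ an integer, $W$ an $\mathcal{H}$-deletion set of $D$ with $|W|\le k+1$, $\mathcal{S}=(S_1,\dots,S_q)$ an ordered partition of $W$, and let $X$ be a solution for $(D,\mathcal{S},W,k)$. If $u\in V(D)$ lies in ${\sf F\textrm{-}Shadow}(X)$ (respectively ${\sf R\textrm{-}Shadow}(X)$), then there is a solution for $(D,\mathcal{S},W,k)$ that contains an important $\{u\}$-$W$ separator in $D$ (respectively an important $\{u\}$-$W$ separator in $D^{rev}$).
   Context: Subgraphs are not necessarily induced; strong components are maximal sets of mutually reachable vertices. A digraph is rooted if some vertex reaches all its vertices. $X$ is an $\mathcal{H}$-deletion set of $D$ if no strong component of $D-X$ contains a subgraph isomorphic to a graph in $\mathcal{H}$. A solution for $(D,\mathcal{S},W,k)$ is a set $X\subseteq V(D)$ with $|X|\le k$, $X\cap W=\emptyset$, $X$ an $\mathcal{H}$-deletion set, and $X$ intersecting every directed $S_i$-$S_j$ path for all $i<j$. For $X\subseteq V(D)\setminus W$, ${\sf F\textrm{-}Shadow}(X)$ is the set of vertices $u\notin X$ such that $D-X$ has no directed path from $u$ to $W$, and ${\sf R\textrm{-}Shadow}(X)$ is the set of $u\notin X$ such that $D-X$ has no directed path from $W$ to $u$. $D^{rev}$ is $D$ with all arcs reversed. For disjoint $A,B$, an $A$-$B$ separator is a set $C$ disjoint from $A\cup B$ with no $A$-$B$ path in $D-C$; $R_D(A,C)$ is the set of vertices reachable from $A$ in $D-C$; $C'$ covers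 $C$ if $R_D(A,C')\supseteq R_D(A,C)$. An $A$-$B$ separator $C$ is important if there is no $A$-$B$ separator $C'\neq C$ with $|C'|\le|C|$ that covers $C$. *)

theory Defs
  imports Main
begin

definition digraph :: "'a set \<Rightarrow> ('a \<times> 'a) set \<Rightarrow> bool" where
  "digraph V A \<longleftrightarrow> finite V \<and> A \<subseteq> V \<times> V \<and> (\<forall>x. (x, x) \<notin> A)"

definition reach :: "'a set \<Rightarrow> ('a \<times> 'a) set \<Rightarrow> 'a \<Rightarrow> 'a \<Rightarrow> bool" where
  "reach V A x y \<longleftrightarrow> x \<in> V \<and> y \<in> V \<and> (x, y) \<in> (A \<inter> (V \<times> V))\<^sup>*"

definition del_arcs :: "'a set \<Rightarrow> ('a \<times> 'a) set \<Rightarrow> 'a set \<Rightarrow> ('a \<times> 'a) set" where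
  "del_arcs V A X = A \<inter> ((V - X) \<times> (V - X))"

definition rooted :: "'a set \<Rightarrow> ('a \<times> 'a) set \<Rightarrow> bool" where
  "rooted V A \<longleftrightarrow> (\<exists>r\<in>V. \<forall>v\<in>V. reach V A r v)"

definition strong_component :: "'a set \<Rightarrow> ('a \<times> 'a) set \<Rightarrow> 'a set \<Rightarrow> bool" where
  "strong_component V A C \<longleftrightarrow> C \<noteq> {} \<and> C \<subseteq> V
     \<and> (\<forall>x\<in>C. \<forall>y\<in>C. reach V A x y \<and> reach V A y x)
     \<and> (\<forall>z\<in>V. (\<exists>x\<in>C. reach V A x z \<and> reach V A z x) \<longrightarrow> z \<in> C)"

definition contains_copy :: "'a set \<Rightarrow> ('a \<times> 'a) set \<Rightarrow> 'b set \<Rightarrow> ('b \<times> 'b) set \<Rightarrow> bool" where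
  "contains_copy C A VH AH \<longleftrightarrow>
     (\<exists>f. inj_on f VH \<and> f ` VH \<subseteq> C \<and> (\<forall>(a, b)\<in>AH. (f a, f b) \<in> A))"

definition H_deletion_set ::
  "('b set \<times> ('b \<times> 'b) set) set \<Rightarrow> 'a set \<Rightarrow> ('a \<times> 'a) set \<Rightarrow> 'a set \<Rightarrow> bool" where
  "H_deletion_set \<H> V A X \<longleftrightarrow> X \<subseteq> V \<and>
     (\<forall>C. strong_component (V - X) (del_arcs V A X) C \<longrightarrow>
        (\<forall>(VH, AH)\<in>\<H>. \<not> contains_copy C (del_arcs V A X) VH AH))"

text \<open>Ordered partition (S_1,...,S_q) of W, represented as a list (index i = S ! i).\<close>
definition ordered_partition :: "'a set list \<Rightarrow> 'a set \<Rightarrow> bool" where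
  "ordered_partition S W \<longleftrightarrow> (\<forall>i<length S. S ! i \<noteq> {})
     \<and> (\<forall>i<length S. \<forall>j<length S. i \<noteq> j \<longrightarrow> S ! i \<inter> S ! j = {})
     \<and> \<Union> (set S) = W"

definition is_solution ::
  "('b set \<times> ('b \<times> 'b) set) set \<Rightarrow> 'a set \<Rightarrow> ('a \<times> 'a) set \<Rightarrow> 'a set list \<Rightarrow> 'a set
    \<Rightarrow> int \<Rightarrow> 'a set \<Rightarrow> bool" where
  "is_solution \<H> V A S W k X \<longleftrightarrow> X \<subseteq> V \<and> int (card X) \<le> k \<and> X \<inter> W = {}
     \<and> H_deletion_set \<H> V A X
     \<and> (\<forall>i j. i < j \<and> j < length S \<longrightarrow>
          (\<forall>s\<in>S ! i. \<forall>t\<in>S ! j. \<not> reach (V - X) (del_arcs V A X) s t))"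

definition F_shadow :: "'a set \<Rightarrow> ('a \<times> 'a) set \<Rightarrow> 'a set \<Rightarrow> 'a set \<Rightarrow> 'a set" where
  "F_shadow V A W X = {u \<in> V - X. \<not> (\<exists>w\<in>W. reach (V - X) (del_arcs V A X) u w)}"

definition R_shadow :: "'a set \<Rightarrow> ('a \<times> 'a) set \<Rightarrow> 'a set \<Rightarrow> 'a set \<Rightarrow> 'a set" where
  "R_shadow V A W X = {u \<in> V - X. \<not> (\<exists>w\<in>W. reach (V - X) (del_arcs V A X) w u)}"

definition separator :: "'a set \<Rightarrow> ('a \<times> 'a) set \<Rightarrow> 'a set \<Rightarrow> 'a set \<Rightarrow> 'a set \<Rightarrow> bool" where
  "separator V A Src Tgt C \<longleftrightarrow> C \<subseteq> V \<and> C \<inter> (Src \<union> Tgt) = {}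
     \<and> (\<forall>a\<in>Src. \<forall>b\<in>Tgt. \<not> reach (V - C) (del_arcs V A C) a b)"

definition reach_set :: "'a set \<Rightarrow> ('a \<times> 'a) set \<Rightarrow> 'a set \<Rightarrow> 'a set \<Rightarrow> 'a set" where
  "reach_set V A Src C = {v. \<exists>a\<in>Src. reach (V - C) (del_arcs V A C) a v}"

definition important_separator :: "'a set \<Rightarrow> ('a \<times> 'a) set \<Rightarrow> 'a set \<Rightarrow> 'a set \<Rightarrow> 'a set \<Rightarrow> bool" where
  "important_separator V A Src Tgt C \<longleftrightarrow> separator V A Src Tgt C \<and>
     \<not> (\<exists>C'. separator V A Src Tgt C' \<and> C' \<noteq> C \<and> card C' \<le> card C
            \<and> reach_set V A Src C \<subseteq> reach_set V A Src C')"

end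

theory Submission
  imports Defs
begin

(*
  Let R be the set of vertices reachable from u in D - X.  As u is in the forward shadow,
  R avoids W, so the vertices C0 of X entered by arcs from R form a u-W separator.  Replace
  C0 by an important u-W separator C with |C| \<le> |C0| whose reach set R' contains R; then
  X' = (X - C0) \<union> C is no larger than X, and C0 - C \<subseteq> R'.  Since C \<subseteq> X', the set R' is
  closed under the arcs of D - X'.  Hence every strong component of D - X' lies inside R'
  (so it avoids the deletion set W) or outside R' (so it avoids X, since X \<subseteq> X' \<union> R'), and a
  W-W path of D - X' never enters R', so it is already a path of D - X.  The reverse shadow
  is the forward shadow of the reversed digraph.
*)

lemma reach_refl: "x \<in> V \<Longrightarrow> reach V E x x"
  by (simp add: reach_def)

lemma reach_trans: "reach V E x y \<Longrightarrow> reach V E y z \<Longrightarrow> reach V E x z"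
  by (auto simp: reach_def)

lemma reach_del_arcs_iff:
  "reach (V - X) (del_arcs V A X) x y \<longleftrightarrow>
     x \<in> V - X \<and> y \<in> V - X \<and> (x, y) \<in> (del_arcs V A X)\<^sup>*"
proof -
  have "del_arcs V A X \<inter> (V - X) \<times> (V - X) = del_arcs V A X"
    by (auto simp: del_arcs_def)
  then show ?thesis by (simp add: reach_def)
qed

lemma del_arcs_antimono: "X \<subseteq> Y \<Longrightarrow> del_arcs V A Y \<subseteq> del_arcs V A X"
  by (auto simp: del_arcs_def)

lemma rtrancl_outside_closed_set:
  assumes "(a, b) \<in> E\<^sup>*" and closed: "E `` R \<subseteq> R" and "b \<notin> R"
  shows "(a, b) \<in> (E \<inter> (- R) \<times> (- R))\<^sup>*"
  using assms(1,3)
proof (induction rule: converse_rtrancl_induct)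
  case base
  then show ?case by simp
next
  case (step a y)
  have "y \<notin> R"
    using step.hyps(2) step.prems Image_closed_trancl[OF closed] by blast
  moreover have "a \<notin> R"
    using step.hyps(1) \<open>y \<notin> R\<close> closed by blast
  ultimately have "(a, y) \<in> E \<inter> (- R) \<times> (- R)"
    using step.hyps(1) by blast
  then show ?case
    using step.IH[OF step.prems] by (rule converse_rtrancl_into_rtrancl)
qed

lemma rtrancl_within_class:
  assumes "(a, b) \<in> E\<^sup>*" "(b, a) \<in> E\<^sup>*"
    and "{y. (a, y) \<in> E\<^sup>* \<and> (y, a) \<in> E\<^sup>*} \<subseteq> M"
  shows "(a, b) \<in> (E \<inter> M \<times> M)\<^sup>*"
  using assms
proof (induction rule: rtrancl_induct)
  case base
  then show ?case by simp
next
  case (step y z)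
  have "(y, a) \<in> E\<^sup>*"
    using step.hyps(2) step.prems(1) by (rule converse_rtrancl_into_rtrancl)
  have "(a, z) \<in> E\<^sup>*"
    using step.hyps by (rule rtrancl_into_rtrancl)
  have "(a, y) \<in> (E \<inter> M \<times> M)\<^sup>*"
    using step.IH[OF \<open>(y, a) \<in> E\<^sup>*\<close> step.prems(2)] .
  moreover have "y \<in> M" "z \<in> M"
    using step.hyps(1) step.prems \<open>(y, a) \<in> E\<^sup>*\<close> \<open>(a, z) \<in> E\<^sup>*\<close> by auto
  ultimately show ?case
    using step.hyps(2) by (meson IntI SigmaI rtrancl_into_rtrancl)
qed

lemma strong_component_connected_inside:
  assumes K: "strong_component V E K" and "x \<in> K" "y \<in> K"
  shows "(x, y) \<in> (E \<inter> K \<times> K)\<^sup>*"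
proof -
  let ?E = "E \<inter> V \<times> V"
  have "x \<in> V" using K \<open>x \<in> K\<close> by (auto simp: strong_component_def)
  have class_in_K: "{z. (x, z) \<in> ?E\<^sup>* \<and> (z, x) \<in> ?E\<^sup>*} \<subseteq> K"
  proof
    fix z assume z: "z \<in> {z. (x, z) \<in> ?E\<^sup>* \<and> (z, x) \<in> ?E\<^sup>*}"
    have "(z, x) \<in> ?E\<^sup>*" using z by simp
    then have "z \<in> V"
      using \<open>x \<in> V\<close> by (cases rule: converse_rtranclE) auto
    then have "reach V E x z \<and> reach V E z x"
      using z \<open>x \<in> V\<close> by (simp add: reach_def)
    then show "z \<in> K"
      using K \<open>x \<in> K\<close> \<open>z \<in> V\<close> unfolding strong_component_def by blast
  qed
  have "reach V E x y" "reach V E y x"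
    using K assms(2,3) unfolding strong_component_def by blast+
  then have "(x, y) \<in> ?E\<^sup>*" "(y, x) \<in> ?E\<^sup>*"
    by (simp_all add: reach_def)
  from rtrancl_within_class[OF this class_in_K]
  show ?thesis by (rule rtrancl_mono[THEN subsetD, rotated]) auto
qed

lemma strong_component_of:
  assumes "x \<in> V"
  shows "strong_component V E {z \<in> V. reach V E x z \<and> reach V E z x}"
  using assms unfolding strong_component_def
  by (auto intro: reach_refl dest: reach_trans)

lemma strong_component_inside_or_outside_closed:
  assumes "strong_component V E K" and closed: "E `` R \<subseteq> R"
  shows "K \<subseteq> R \<or> K \<inter> R = {}"
proof (rule ccontr)
  assume "\<not> ?thesis"
  then obtain x y where "x \<in> K \<inter> R" "y \<in> K - R" by blast
  then have "(x, y) \<in> (E \<inter> V \<times> V)\<^sup>*"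
    using assms(1) unfolding strong_component_def reach_def by blast
  then have "(x, y) \<in> E\<^sup>*"
    using rtrancl_mono[of "E \<inter> V \<times> V" E] by blast
  then show False
    using \<open>x \<in> K \<inter> R\<close> \<open>y \<in> K - R\<close> Image_closed_trancl[OF closed] by blast
qed

lemma strong_component_avoiding_deletion_set_has_no_copy:
  assumes Y: "H_deletion_set \<H> V A Y"
    and K: "strong_component (V - X) (del_arcs V A X) K" and "K \<inter> Y = {}"
    and H: "(VH, AH) \<in> \<H>" "AH \<subseteq> VH \<times> VH"
  shows "\<not> contains_copy K (del_arcs V A X) VH AH"
proof
  assume "contains_copy K (del_arcs V A X) VH AH"
  then obtain f where f: "inj_on f VH" "f ` VH \<subseteq> K"
    "\<forall>(a, b)\<in>AH. (f a, f b) \<in> del_arcs V A X"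
    unfolding contains_copy_def by blast
  obtain x where "x \<in> K" using K by (auto simp: strong_component_def)
  have KV: "K \<subseteq> V - Y"
    using K \<open>K \<inter> Y = {}\<close> by (auto simp: strong_component_def)
  have arcs: "del_arcs V A X \<inter> K \<times> K \<subseteq> del_arcs V A Y"
    using KV by (auto simp: del_arcs_def)
  define K' where "K' = {z \<in> V - Y. reach (V - Y) (del_arcs V A Y) x z
                                    \<and> reach (V - Y) (del_arcs V A Y) z x}"
  have K': "strong_component (V - Y) (del_arcs V A Y) K'"
    unfolding K'_def by (rule strong_component_of) (use KV \<open>x \<in> K\<close> in blast)
  have "K \<subseteq> K'"
  proof
    fix z assume "z \<in> K"
    have "(x, z) \<in> (del_arcs V A Y)\<^sup>*" "(z, x) \<in> (del_arcs V A Y)\<^sup>*"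
      using strong_component_connected_inside[OF K] \<open>x \<in> K\<close> \<open>z \<in> K\<close>
        rtrancl_mono[OF arcs] by (meson subsetD)+
    then show "z \<in> K'"
      using KV \<open>x \<in> K\<close> \<open>z \<in> K\<close> by (auto simp: K'_def reach_del_arcs_iff)
  qed
  moreover have "\<forall>(a, b)\<in>AH. (f a, f b) \<in> del_arcs V A Y"
  proof (clarify)
    fix a b assume "(a, b) \<in> AH"
    then have "(f a, f b) \<in> del_arcs V A X \<inter> K \<times> K"
      using f(2,3) H(2) by blast
    then show "(f a, f b) \<in> del_arcs V A Y" using arcs by blast
  qed
  ultimately have "contains_copy K' (del_arcs V A Y) VH AH"
    using f(1,2) unfolding contains_copy_def by blast
  then show False
    using Y K' H(1) unfolding H_deletion_set_def by blast
qed

lemma reach_set_subset: "reach_set V A Src C \<subseteq> V - C"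
  by (auto simp: reach_set_def reach_def)

lemma reach_set_closed: "del_arcs V A C `` reach_set V A Src C \<subseteq> reach_set V A Src C"
proof
  fix y assume "y \<in> del_arcs V A C `` reach_set V A Src C"
  then obtain a v where "a \<in> Src" "a \<in> V - C" "(a, v) \<in> (del_arcs V A C)\<^sup>*"
    and arc: "(v, y) \<in> del_arcs V A C"
    by (auto simp: reach_set_def reach_del_arcs_iff)
  moreover from arc have "y \<in> V - C" by (simp add: del_arcs_def)
  ultimately show "y \<in> reach_set V A Src C"
    by (auto simp: reach_set_def reach_del_arcs_iff intro: rtrancl_into_rtrancl)
qed

lemma reach_set_arc_closed:
  assumes "v \<in> reach_set V A Src C" "(v, y) \<in> A" "y \<in> V - C"
  shows "y \<in> reach_set V A Src C"
proof -
  have "(v, y) \<in> del_arcs V A C"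
    using assms reach_set_subset[of V A Src C] by (auto simp: del_arcs_def)
  then show ?thesis using reach_set_closed[of V A C Src] assms(1) by blast
qed

lemma reach_set_antimono:
  assumes "C \<subseteq> C'"
  shows "reach_set V A Src C' \<subseteq> reach_set V A Src C"
  using rtrancl_mono[OF del_arcs_antimono[OF assms]] assms
  by (fastforce simp: reach_set_def reach_del_arcs_iff)

lemma reach_set_restrict_to_entered:
  assumes "C \<subseteq> X" "X \<inter> Src = {}"
    and entered: "\<forall>v\<in>reach_set V A Src X. \<forall>y\<in>X. (v, y) \<in> A \<longrightarrow> y \<in> C"
  shows "reach_set V A Src C = reach_set V A Src X"
proof
  show "reach_set V A Src X \<subseteq> reach_set V A Src C"
    using assms(1) by (rule reach_set_antimono)
  show "reach_set V A Src C \<subseteq> reach_set V A Src X"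
  proof
    fix v assume "v \<in> reach_set V A Src C"
    then obtain a where a: "a \<in> Src" "a \<in> V - C" "(a, v) \<in> (del_arcs V A C)\<^sup>*"
      by (auto simp: reach_set_def reach_del_arcs_iff)
    from a(3) show "v \<in> reach_set V A Src X"
    proof (induction rule: rtrancl_induct)
      case base
      then show ?case
        using a(1,2) assms(2) by (auto simp: reach_set_def reach_del_arcs_iff)
    next
      case (step y z)
      then have "z \<in> V - C" "(y, z) \<in> A" by (auto simp: del_arcs_def)
      then have "z \<notin> X" using entered step.IH by blast
      then have "(y, z) \<in> del_arcs V A X"
        using \<open>z \<in> V - C\<close> \<open>(y, z) \<in> A\<close> reach_set_subset step.IH
        by (fastforce simp: del_arcs_def)
      then show ?case using reach_set_closed[of V A X Src] step.IH by blast
    qed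
  qed
qed

lemma separator_iff_reach_set:
  "separator V A Src Tgt C \<longleftrightarrow>
     C \<subseteq> V \<and> C \<inter> (Src \<union> Tgt) = {} \<and> reach_set V A Src C \<inter> Tgt = {}"
  by (auto simp: separator_def reach_set_def)

lemma important_separatorI:
  assumes "finite V" and sep: "separator V A Src Tgt C"
    and entered: "\<forall>x\<in>C. \<exists>v\<in>reach_set V A Src C. (v, x) \<in> A"
    and maximal: "\<forall>C'. separator V A Src Tgt C' \<and> card C' \<le> card C
                     \<and> reach_set V A Src C \<subseteq> reach_set V A Src C'
                     \<longrightarrow> card (reach_set V A Src C') \<le> card (reach_set V A Src C)"
  shows "important_separator V A Src Tgt C"
  unfolding important_separator_def
proof (intro conjI sep notI)
  let ?R = "reach_set V A Src"
  assume "\<exists>C'. separator V A Src Tgt C' \<and> C' \<noteq> C \<and> card C' \<le> card C \<and> ?R C \<subseteq> ?R C'"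
  then obtain C' where C': "separator V A Src Tgt C'" "C' \<noteq> C" "card C' \<le> card C"
    "?R C \<subseteq> ?R C'" by blast
  have "finite (?R C')"
    using reach_set_subset \<open>finite V\<close> by (meson finite_Diff finite_subset)
  moreover have "card (?R C') \<le> card (?R C)"
    using maximal C'(1,3,4) by blast
  ultimately have same: "?R C' = ?R C"
    using card_seteq C'(4) by blast
  have "C \<subseteq> C'"
  proof
    fix x assume "x \<in> C"
    then obtain v where v: "v \<in> ?R C'" "(v, x) \<in> A" using entered same by auto
    show "x \<in> C'"
    proof (rule ccontr)
      assume "x \<notin> C'"
      moreover have "x \<in> V" using \<open>x \<in> C\<close> sep unfolding separator_def by blast
      ultimately have "x \<in> ?R C'" using reach_set_arc_closed[OF v] by blast
      then show False using \<open>x \<in> C\<close> reach_set_subset[of V A Src C] same by blast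
    qed
  qed
  moreover have "finite C'"
    using C'(1) \<open>finite V\<close> by (auto simp: separator_def intro: finite_subset)
  ultimately have "C = C'" using C'(3) by (simp add: card_seteq)
  then show False using C'(2) by simp
qed

lemma important_separator_covering:
  assumes "finite V" "separator V A Src Tgt C0"
  shows "\<exists>C. important_separator V A Src Tgt C \<and> card C \<le> card C0
             \<and> reach_set V A Src C0 \<subseteq> reach_set V A Src C"
proof -
  let ?R = "reach_set V A Src"
  define P where "P C \<longleftrightarrow> separator V A Src Tgt C \<and> card C \<le> card C0 \<and> ?R C0 \<subseteq> ?R C"
    for C
  have "P C0" by (simp add: P_def assms(2))
  moreover have "\<forall>C. P C \<longrightarrow> card (?R C) < Suc (card V)"
    using card_mono[OF assms(1) subset_trans[OF reach_set_subset Diff_subset]]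
    by (simp add: le_imp_less_Suc)
  \<comment> \<open>Maximise the reach set first and only then minimise the size: minimality makes every
    vertex of \<open>C\<close> entered from the reach set, and together with maximality this gives importance.\<close>
  ultimately obtain C1 where C1: "P C1" "\<forall>C. P C \<longrightarrow> card (?R C) \<le> card (?R C1)"
    using Lattices_Big.ex_has_greatest_nat[of P C0 "\<lambda>C. card (?R C)"] by blast
  obtain C where C: "P C" "card (?R C) = card (?R C1)"
    and least: "\<forall>C'. P C' \<and> card (?R C') = card (?R C1) \<longrightarrow> card C \<le> card C'"
    using ex_has_least_nat[of "\<lambda>C. P C \<and> card (?R C) = card (?R C1)" C1 card] C1(1) by blast
  have sep: "separator V A Src Tgt C" using C(1) by (simp add: P_def)
  have "finite C" using sep assms(1) by (auto simp: separator_def intro: finite_subset)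
  have "\<forall>x\<in>C. \<exists>v\<in>?R C. (v, x) \<in> A"
  proof (rule ccontr)
    assume "\<not> (\<forall>x\<in>C. \<exists>v\<in>?R C. (v, x) \<in> A)"
    then obtain x where "x \<in> C" and not_entered: "\<forall>v\<in>?R C. (v, x) \<notin> A" by blast
    have same: "?R (C - {x}) = ?R C"
      by (rule reach_set_restrict_to_entered) (use not_entered sep in \<open>auto simp: separator_def\<close>)
    have "card (C - {x}) < card C"
      using \<open>finite C\<close> \<open>x \<in> C\<close> by (rule card_Diff1_less)
    moreover have "P (C - {x})"
      using C(1) same \<open>card (C - {x}) < card C\<close> sep
      unfolding P_def separator_iff_reach_set by auto
    ultimately show False using least C(2) same by (metis not_le)
  qed
  moreover have "\<forall>C'. separator V A Src Tgt C' \<and> card C' \<le> card C \<and> ?R C \<subseteq> ?R C'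
                   \<longrightarrow> card (?R C') \<le> card (?R C)"
  proof (intro allI impI)
    fix C' assume "separator V A Src Tgt C' \<and> card C' \<le> card C \<and> ?R C \<subseteq> ?R C'"
    then have "P C'" using C(1) unfolding P_def by auto
    then show "card (?R C') \<le> card (?R C)" using C1(2) C(2) by simp
  qed
  ultimately have "important_separator V A Src Tgt C"
    using important_separatorI[OF assms(1) sep] by blast
  then show ?thesis using C(1) unfolding P_def by blast
qed

lemma rtrancl_del_arcs_exchange:
  assumes "(a, b) \<in> (del_arcs V A X')\<^sup>*" "del_arcs V A X' `` R \<subseteq> R" "b \<notin> R"
    and "X \<subseteq> X' \<union> R"
  shows "(a, b) \<in> (del_arcs V A X)\<^sup>*"
proof -
  have "del_arcs V A X' \<inter> (- R) \<times> (- R) \<subseteq> del_arcs V A X"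
    using assms(4) by (auto simp: del_arcs_def)
  then show ?thesis
    using rtrancl_outside_closed_set[OF assms(1-3)] rtrancl_mono by blast
qed

lemma H_deletion_set_exchange:
  assumes H: "\<forall>(VH, AH)\<in>\<H>. AH \<subseteq> VH \<times> VH"
    and Y: "H_deletion_set \<H> V A Y" and Z: "H_deletion_set \<H> V A Z"
    and "X \<subseteq> V" and closed: "del_arcs V A X `` R \<subseteq> R"
    and "R \<inter> Y = {}" and "Z \<subseteq> X \<union> R"
  shows "H_deletion_set \<H> V A X"
  unfolding H_deletion_set_def
proof (intro conjI allI impI)
  show "X \<subseteq> V" by fact
  fix K assume K: "strong_component (V - X) (del_arcs V A X) K"
  show "\<forall>(VH, AH)\<in>\<H>. \<not> contains_copy K (del_arcs V A X) VH AH"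
  proof clarify
    fix VH AH assume HK: "(VH, AH) \<in> \<H>" "contains_copy K (del_arcs V A X) VH AH"
    have "AH \<subseteq> VH \<times> VH" using H HK(1) by blast
    have "K \<subseteq> V - X" using K by (simp add: strong_component_def)
    from strong_component_inside_or_outside_closed[OF K closed]
    have "K \<inter> Y = {} \<or> K \<inter> Z = {}"
      using \<open>R \<inter> Y = {}\<close> \<open>Z \<subseteq> X \<union> R\<close> \<open>K \<subseteq> V - X\<close> by blast
    then show False
      using strong_component_avoiding_deletion_set_has_no_copy[OF Y K _ HK(1) \<open>AH \<subseteq> VH \<times> VH\<close>]
        strong_component_avoiding_deletion_set_has_no_copy[OF Z K _ HK(1) \<open>AH \<subseteq> VH \<times> VH\<close>]
        HK(2) by blast
  qed
qed

lemma is_solution_exchange: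
  assumes H: "\<forall>(VH, AH)\<in>\<H>. AH \<subseteq> VH \<times> VH"
    and W: "H_deletion_set \<H> V A W" and "\<Union> (set S) \<subseteq> W"
    and sol: "is_solution \<H> V A S W k X"
    and "X' \<subseteq> V" "card X' \<le> card X" "X' \<inter> W = {}"
    and closed: "del_arcs V A X' `` R \<subseteq> R" and "R \<inter> W = {}" and "X \<subseteq> X' \<union> R"
  shows "is_solution \<H> V A S W k X'"
  unfolding is_solution_def
proof (intro conjI allI impI ballI)
  show "X' \<subseteq> V" "X' \<inter> W = {}" by fact+
  show "int (card X') \<le> k"
    using sol \<open>card X' \<le> card X\<close> by (simp add: is_solution_def)
  show "H_deletion_set \<H> V A X'"
    using H_deletion_set_exchange[OF H W _ \<open>X' \<subseteq> V\<close> closed \<open>R \<inter> W = {}\<close> \<open>X \<subseteq> X' \<union> R\<close>]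
      sol by (simp add: is_solution_def)
  fix i j s t
  assume ij: "i < j \<and> j < length S" and "s \<in> S ! i" "t \<in> S ! j"
  then have "S ! i \<in> set S" "S ! j \<in> set S" by auto
  then have "s \<in> W" "t \<in> W"
    using \<open>\<Union> (set S) \<subseteq> W\<close> \<open>s \<in> S ! i\<close> \<open>t \<in> S ! j\<close> by blast+
  show "\<not> reach (V - X') (del_arcs V A X') s t"
  proof
    assume "reach (V - X') (del_arcs V A X') s t"
    then have "(s, t) \<in> (del_arcs V A X)\<^sup>*"
      using rtrancl_del_arcs_exchange[OF _ closed _ \<open>X \<subseteq> X' \<union> R\<close>] \<open>R \<inter> W = {}\<close> \<open>t \<in> W\<close>
      by (auto simp: reach_del_arcs_iff)
    moreover have "s \<in> V - X" "t \<in> V - X"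
      using W sol \<open>s \<in> W\<close> \<open>t \<in> W\<close> by (auto simp: H_deletion_set_def is_solution_def)
    ultimately have "reach (V - X) (del_arcs V A X) s t"
      by (simp add: reach_del_arcs_iff)
    then show False
      using sol ij \<open>s \<in> S ! i\<close> \<open>t \<in> S ! j\<close> unfolding is_solution_def by blast
  qed
qed

lemma card_Diff_Un_le:
  assumes "finite X" "C0 \<subseteq> X" "card C \<le> card C0"
  shows "card ((X - C0) \<union> C) \<le> card X"
proof -
  have "card ((X - C0) \<union> C) \<le> card (X - C0) + card C" by (rule card_Un_le)
  also have "\<dots> \<le> card (X - C0) + card C0" using assms(3) by simp
  also have "\<dots> = card X"
    using assms(1,2) by (simp add: card_Diff_subset card_mono finite_subset)
  finally show ?thesis .
qed

lemma F_shadow_solution_with_important_separator: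
  assumes H: "\<forall>(VH, AH)\<in>\<H>. AH \<subseteq> VH \<times> VH" and "finite V"
    and W: "H_deletion_set \<H> V A W" and S: "\<Union> (set S) \<subseteq> W"
    and sol: "is_solution \<H> V A S W k X" and u: "u \<in> F_shadow V A W X"
  shows "\<exists>X'. is_solution \<H> V A S W k X' \<and> (\<exists>C. C \<subseteq> X' \<and> important_separator V A {u} W C)"
proof -
  let ?R = "reach_set V A {u}"
  have "X \<subseteq> V" "X \<inter> W = {}" using sol by (auto simp: is_solution_def)
  have "u \<notin> X" and RW: "?R X \<inter> W = {}"
    using u by (auto simp: F_shadow_def reach_set_def)
  define C0 where "C0 = {y \<in> X. \<exists>v\<in>?R X. (v, y) \<in> A}"
  have "C0 \<subseteq> X" by (auto simp: C0_def)
  have R0: "?R C0 = ?R X"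
    by (rule reach_set_restrict_to_entered) (use \<open>u \<notin> X\<close> in \<open>auto simp: C0_def\<close>)
  have "separator V A {u} W C0"
    unfolding separator_iff_reach_set
    using \<open>C0 \<subseteq> X\<close> \<open>X \<subseteq> V\<close> \<open>u \<notin> X\<close> \<open>X \<inter> W = {}\<close> R0 RW by auto
  then obtain C where C: "important_separator V A {u} W C" "card C \<le> card C0" "?R X \<subseteq> ?R C"
    using important_separator_covering[OF \<open>finite V\<close>] R0 by metis
  then have "C \<subseteq> V" "C \<inter> W = {}" "?R C \<inter> W = {}"
    by (auto simp: important_separator_def separator_iff_reach_set)
  define X' where "X' = (X - C0) \<union> C"
  have "card X' \<le> card X"
    unfolding X'_def
    using card_Diff_Un_le[OF finite_subset[OF \<open>X \<subseteq> V\<close> \<open>finite V\<close>] \<open>C0 \<subseteq> X\<close> C(2)] .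
  have "C0 - C \<subseteq> ?R C"
  proof
    fix y assume "y \<in> C0 - C"
    then obtain v where "v \<in> ?R X" "(v, y) \<in> A" "y \<in> X" "y \<notin> C"
      by (auto simp: C0_def)
    then show "y \<in> ?R C"
      using C(3) \<open>X \<subseteq> V\<close> reach_set_arc_closed[of v V A "{u}" C y] by blast
  qed
  then have "X \<subseteq> X' \<union> ?R C" by (auto simp: X'_def)
  moreover have "del_arcs V A X' `` ?R C \<subseteq> ?R C"
    using del_arcs_antimono[of C X' V A] reach_set_closed[of V A C "{u}"]
    by (auto simp: X'_def)
  moreover have "X' \<subseteq> V" "X' \<inter> W = {}"
    using \<open>X \<subseteq> V\<close> \<open>C \<subseteq> V\<close> \<open>X \<inter> W = {}\<close> \<open>C \<inter> W = {}\<close> by (auto simp: X'_def)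
  ultimately have "is_solution \<H> V A S W k X'"
    using is_solution_exchange[OF H W S sol _ \<open>card X' \<le> card X\<close>] \<open>?R C \<inter> W = {}\<close> by blast
  then show ?thesis using C(1) by (auto simp: X'_def)
qed

definition converse_family :: "('b set \<times> ('b \<times> 'b) set) set \<Rightarrow> ('b set \<times> ('b \<times> 'b) set) set"
  where "converse_family \<H> = (\<lambda>(VH, AH). (VH, AH\<inverse>)) ` \<H>"

lemma del_arcs_converse: "del_arcs V (A\<inverse>) X = (del_arcs V A X)\<inverse>"
  by (auto simp: del_arcs_def)

lemma reach_converse: "reach V (E\<inverse>) x y = reach V E y x"
proof -
  have "E\<inverse> \<inter> V \<times> V = (E \<inter> V \<times> V)\<inverse>" by auto
  then show ?thesis by (auto simp: reach_def rtrancl_converse)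
qed

lemma strong_component_converse: "strong_component V (E\<inverse>) K = strong_component V E K"
  unfolding strong_component_def reach_converse by blast

lemma contains_copy_converse:
  "contains_copy K (B\<inverse>) VH (AH\<inverse>) = contains_copy K B VH AH"
proof -
  have "(\<forall>(a, b)\<in>AH\<inverse>. (f a, f b) \<in> B\<inverse>) \<longleftrightarrow> (\<forall>(a, b)\<in>AH. (f a, f b) \<in> B)" for f
    by auto
  then show ?thesis by (simp add: contains_copy_def)
qed

lemma H_deletion_set_converse:
  "H_deletion_set (converse_family \<H>) V (A\<inverse>) X = H_deletion_set \<H> V A X"
  unfolding H_deletion_set_def del_arcs_converse strong_component_converse converse_family_def
  by (simp add: contains_copy_converse split_def)

lemma sorted_wrt_rev_flip:
  "(\<forall>i j. i < j \<and> j < length S \<longrightarrow> (\<forall>s\<in>rev S ! i. \<forall>t\<in>rev S ! j. \<not> P t s))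
   \<longleftrightarrow> (\<forall>i j. i < j \<and> j < length S \<longrightarrow> (\<forall>s\<in>S ! i. \<forall>t\<in>S ! j. \<not> P s t))"
  using sorted_wrt_rev[of "\<lambda>X Y. \<forall>s\<in>X. \<forall>t\<in>Y. \<not> P t s" S]
  by (auto simp: sorted_wrt_iff_nth_less)

lemma is_solution_converse:
  "is_solution (converse_family \<H>) V (A\<inverse>) (rev S) W k X = is_solution \<H> V A S W k X"
  unfolding is_solution_def H_deletion_set_converse del_arcs_converse reach_converse length_rev
  by (simp only: sorted_wrt_rev_flip)

lemma R_shadow_eq_F_shadow_converse: "R_shadow V A W X = F_shadow V (A\<inverse>) W X"
  unfolding R_shadow_def F_shadow_def del_arcs_converse reach_converse ..

theorem lemma12:
  fixes \<H> :: "('b set \<times> ('b \<times> 'b) set) set"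
    and V :: "'a set" and A :: "('a \<times> 'a) set"
    and k :: int and W X :: "'a set" and S :: "'a set list" and u :: 'a
  assumes "finite \<H>"
    and "\<forall>(VH, AH)\<in>\<H>. digraph VH AH \<and> rooted VH AH"
    and "digraph V A"
    and "H_deletion_set \<H> V A W"
    and "int (card W) \<le> k + 1"
    and "ordered_partition S W"
    and "is_solution \<H> V A S W k X"
    and "u \<in> V"
  shows "(u \<in> F_shadow V A W X \<longrightarrow>
            (\<exists>X'. is_solution \<H> V A S W k X' \<and>
                  (\<exists>C. C \<subseteq> X' \<and> important_separator V A {u} W C)))
       \<and> (u \<in> R_shadow V A W X \<longrightarrow>
            (\<exists>X'. is_solution \<H> V A S W k X' \<and>
                  (\<exists>C. C \<subseteq> X' \<and> important_separator V (converse A) {u} W C)))"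
proof (intro conjI impI)
  have H: "\<forall>(VH, AH)\<in>\<H>. AH \<subseteq> VH \<times> VH" using assms(2) by (auto simp: digraph_def)
  have "finite V" using assms(3) by (simp add: digraph_def)
  have S: "\<Union> (set S) \<subseteq> W" using assms(6) by (simp add: ordered_partition_def)
  show "\<exists>X'. is_solution \<H> V A S W k X' \<and> (\<exists>C. C \<subseteq> X' \<and> important_separator V A {u} W C)"
    if "u \<in> F_shadow V A W X"
    using F_shadow_solution_with_important_separator[OF H \<open>finite V\<close> assms(4) S assms(7) that] .
  assume "u \<in> R_shadow V A W X"
  then have u: "u \<in> F_shadow V (A\<inverse>) W X" by (simp add: R_shadow_eq_F_shadow_converse)
  have H': "\<forall>(VH, AH)\<in>converse_family \<H>. AH \<subseteq> VH \<times> VH"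
    using H by (auto simp: converse_family_def)
  have W': "H_deletion_set (converse_family \<H>) V (A\<inverse>) W"
    using assms(4) by (simp add: H_deletion_set_converse)
  have S': "\<Union> (set (rev S)) \<subseteq> W" using S by simp
  have sol': "is_solution (converse_family \<H>) V (A\<inverse>) (rev S) W k X"
    using assms(7) by (simp add: is_solution_converse)
  from F_shadow_solution_with_important_separator[OF H' \<open>finite V\<close> W' S' sol' u]
  show "\<exists>X'. is_solution \<H> V A S W k X' \<and>
              (\<exists>C. C \<subseteq> X' \<and> important_separator V (converse A) {u} W C)"
    unfolding is_solution_converse .
qed

end
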